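(* Every planar $3$-tree has track number at most $4000$.
   Context: A planar $3$-tree is a triangulated plane graph $G$ with $n\ge 3$ vertices such that either $n=3$ and $G$ is a $3$-cycle, or $n>3$ and $G$ has a vertex whose deletion yields a planar $3$-tree with $n-1$ vertices. A $t$-track assignment of a graph $G=(V,E)$ is a partition of $V$ into $t$ sets $V_1,\dots,V_t$, each an independent set of $G$, together with a total order $<_i$ on each $V_i$ (each $(V_i,<_i)$ is called a track). An X-crossing consists of two edges $(u,v)$ and $(x,y)$ with $u,x\in V_i$, $v,y\in V_j$ for some $i\neq j$, $u<_i x$ and $y<_j v$. A track layout is a track assignment with no X-crossing, and the track number of $G$ is the minimum $t$ such that $G$ has a $t$-track layout. *)

theory Defs
  imports Main "HOL-Library.Multiset"
begin

text \<open>Planar 3-trees are described combinatorially together with their multiset of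
(triangular) faces: start from a 3-cycle (two faces, inner and outer, both
bounded by the triangle) and repeatedly insert a new vertex into a face,
joining it to the three vertices of that face (the face is replaced by the
three new triangular faces).  This is exactly the recursive definition by
deletion of a (necessarily degree-3) vertex of a triangulated plane graph.\<close>

inductive planar3tree_faces :: "'a set \<Rightarrow> 'a set set \<Rightarrow> 'a set multiset \<Rightarrow> bool" where
  base: "distinct [a, b, c] \<Longrightarrow>
     planar3tree_faces {a, b, c} {{a, b}, {b, c}, {a, c}} {#{a, b, c}, {a, b, c}#}"
| step: "planar3tree_faces V E F \<Longrightarrow> {x, y, z} \<in># F \<Longrightarrow> v \<notin> V \<Longrightarrow>
     planar3tree_faces (insert v V) (E \<union> {{v, x}, {v, y}, {v, z}})
       (add_mset {v, x, y} (add_mset {v, y, z} (add_mset {v, x, z} (F - {#{x, y, z}#}))))"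

definition planar_3_tree :: "'a set \<Rightarrow> 'a set set \<Rightarrow> bool" where
  "planar_3_tree V E \<longleftrightarrow> (\<exists>F. planar3tree_faces V E F)"

definition track_layout ::
  "'a set \<Rightarrow> 'a set set \<Rightarrow> nat \<Rightarrow> ('a \<Rightarrow> nat) \<Rightarrow> (nat \<Rightarrow> 'a rel) \<Rightarrow> bool" where
  "track_layout V E t col ord \<longleftrightarrow>
     (\<forall>v\<in>V. col v < t) \<and>
     (\<forall>u v. {u, v} \<in> E \<longrightarrow> col u \<noteq> col v) \<and>
     (\<forall>i<t. strict_linear_order_on {v\<in>V. col v = i} (ord i)) \<and>
     (\<forall>u v x y. {u, v} \<in> E \<and> {x, y} \<in> E \<and> u \<in> V \<and> v \<in> V \<and> x \<in> V \<and> y \<in> V \<and>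
        col u = col x \<and> col v = col y \<and> col u \<noteq> col v \<and>
        (u, x) \<in> ord (col u) \<and> (y, v) \<in> ord (col v) \<longrightarrow> False)"

definition has_track_layout :: "'a set \<Rightarrow> 'a set set \<Rightarrow> nat \<Rightarrow> bool" where
  "has_track_layout V E t \<longleftrightarrow> (\<exists>col ord. track_layout V E t col ord)"

end

theory Submission
  imports Defs
begin

text \<open>A planar 3-tree is built by repeatedly stacking a vertex onto a triangle, so in the
  order of insertion every vertex has at most three earlier neighbours (its parents), and the
  parents of a vertex are pairwise adjacent. By induction on k, a graph with such a parent
  structure of width k has a track layout on t(k) tracks, where t(0) = 1 and
  t(k+1) = 3 t(k)^2; in particular t(3) = 2187.

  For the inductive step layer the vertices by depth, the distance along parent links to a
  parentless vertex; every edge joins equal or consecutive layers. A vertex with a parent has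
  one in the previous layer, so the parents inside the layer form a parent structure of width
  k - 1, and by induction the layers have a layout (lcol, lord). Every component of a layer
  has a root whose parents lie in the previous layer and include the previous-layer parents of
  the whole component. A vertex v is put on the track (depth v mod 3, lcol v, lcol of the
  highest-ranked parent of its root), and the vertices of a layer are ordered by the position
  of that parent of their root, then by root, then by lord. A crossing inside a layer is
  excluded by the layout of the layer, and a crossing between two consecutive layers forces
  one inside the lower layer, between the top parents of the two roots.\<close>

definition parent_adj :: "('a \<Rightarrow> 'a set) \<Rightarrow> 'a \<Rightarrow> 'a \<Rightarrow> bool" where
  "parent_adj P u v \<longleftrightarrow> u \<in> P v \<or> v \<in> P u"

definition parent_edges :: "'a set \<Rightarrow> ('a \<Rightarrow> 'a set) \<Rightarrow> 'a set set" where
  "parent_edges V P = {{v, p} | v p. v \<in> V \<and> p \<in> P v}"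

text \<open>P v are the earlier neighbours of v in the order given by the injective rank rk:
  a perfect elimination order of a chordal graph of tree-width at most k.\<close>

definition parent_structure :: "nat \<Rightarrow> 'a set \<Rightarrow> ('a \<Rightarrow> 'a set) \<Rightarrow> ('a \<Rightarrow> nat) \<Rightarrow> bool" where
  "parent_structure k V P rk \<longleftrightarrow> finite V \<and> inj_on rk V \<and>
     (\<forall>v\<in>V. P v \<subseteq> V \<and> card (P v) \<le> k \<and> (\<forall>p\<in>P v. rk p < rk v) \<and>
        (\<forall>p\<in>P v. \<forall>q\<in>P v. rk p < rk q \<longrightarrow> p \<in> P q))"

definition ordered_track_layout ::
  "'a set \<Rightarrow> ('a \<Rightarrow> 'a \<Rightarrow> bool) \<Rightarrow> nat \<Rightarrow> ('a \<Rightarrow> nat) \<Rightarrow> ('a \<Rightarrow> 'a \<Rightarrow> bool) \<Rightarrow> bool" where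
  "ordered_track_layout V adj t col lt \<longleftrightarrow>
     (\<forall>v\<in>V. col v < t) \<and> (\<forall>u\<in>V. \<forall>v\<in>V. adj u v \<longrightarrow> col u \<noteq> col v) \<and>
     (\<forall>x. \<not> lt x x) \<and> (\<forall>x y z. lt x y \<longrightarrow> lt y z \<longrightarrow> lt x z) \<and>
     (\<forall>x\<in>V. \<forall>y\<in>V. x \<noteq> y \<longrightarrow> lt x y \<or> lt y x) \<and>
     (\<forall>u\<in>V. \<forall>v\<in>V. \<forall>x\<in>V. \<forall>y\<in>V. adj u v \<longrightarrow> adj x y \<longrightarrow> col u = col x \<longrightarrow> col v = col y \<longrightarrow>
         lt u x \<longrightarrow> lt y v \<longrightarrow> False)"

fun track_bound :: "nat \<Rightarrow> nat" where
  "track_bound 0 = 1"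
| "track_bound (Suc k) = 3 * track_bound k * track_bound k"

lemma track_bound_pos: "0 < track_bound k"
  by (induction k) auto

lemma ordered_track_layout_has_track_layout:
  assumes layout: "ordered_track_layout V adj t col lt"
    and edges: "\<And>u w. {u, w} \<in> E \<Longrightarrow> u \<in> V \<and> w \<in> V \<and> adj u w"
  shows "has_track_layout V E t"
proof -
  have col_lt: "\<forall>v\<in>V. col v < t"
    and proper: "\<forall>u\<in>V. \<forall>v\<in>V. adj u v \<longrightarrow> col u \<noteq> col v"
    and irreflexive: "\<forall>x. \<not> lt x x" and transitive: "\<forall>x y z. lt x y \<longrightarrow> lt y z \<longrightarrow> lt x z"
    and total: "\<forall>x\<in>V. \<forall>y\<in>V. x \<noteq> y \<longrightarrow> lt x y \<or> lt y x"
    and no_cross: "\<forall>u\<in>V. \<forall>v\<in>V. \<forall>x\<in>V. \<forall>y\<in>V. adj u v \<longrightarrow> adj x y \<longrightarrow>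
       col u = col x \<longrightarrow> col v = col y \<longrightarrow> lt u x \<longrightarrow> lt y v \<longrightarrow> False"
    using layout unfolding ordered_track_layout_def by blast+
  define ord where "ord i = {(u, w). u \<in> V \<and> w \<in> V \<and> col u = i \<and> col w = i \<and> lt u w}" for i
  have "track_layout V E t col ord"
    unfolding track_layout_def
  proof (intro conjI allI impI)
    fix i
    show "strict_linear_order_on {v \<in> V. col v = i} (ord i)"
      unfolding strict_linear_order_on_def
    proof (intro conjI)
      show "trans (ord i)" unfolding trans_def ord_def using transitive by blast
      show "irrefl (ord i)" unfolding irrefl_def ord_def using irreflexive by blast
      show "total_on {v \<in> V. col v = i} (ord i)" unfolding total_on_def ord_def using total by blast
    qed
  next
    fix u v x y
    assume crossing: "{u, v} \<in> E \<and> {x, y} \<in> E \<and> u \<in> V \<and> v \<in> V \<and> x \<in> V \<and> y \<in> V \<and>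
        col u = col x \<and> col v = col y \<and> col u \<noteq> col v \<and> (u, x) \<in> ord (col u) \<and> (y, v) \<in> ord (col v)"
    then have "adj u v" "adj x y" "lt u x" "lt y v"
      using edges[of u v] edges[of x y] unfolding ord_def by auto
    then show False
      using no_cross crossing by blast
  next
    fix u v
    assume "{u, v} \<in> E"
    then show "col u \<noteq> col v"
      using proper edges[of u v] by blast
  qed (use col_lt in blast)
  then show ?thesis
    unfolding has_track_layout_def by blast
qed

lemma parent_structure_parents_comparable:
  assumes "parent_structure k V P rk" "v \<in> V" "p \<in> P v" "q \<in> P v" "p \<noteq> q"
  shows "p \<in> P q \<or> q \<in> P p"
proof -
  have "rk p \<noteq> rk q"
    using assms unfolding parent_structure_def inj_on_def by blast
  then show ?thesis
    using assms unfolding parent_structure_def by (meson linorder_neqE_nat)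
qed

fun depth_upto :: "('a \<Rightarrow> 'a set) \<Rightarrow> nat \<Rightarrow> 'a \<Rightarrow> nat" where
  "depth_upto P 0 v = 0"
| "depth_upto P (Suc n) v = (if P v = {} then 0 else Suc (Min (depth_upto P n ` P v)))"

fun root_upto :: "('a \<Rightarrow> 'a set) \<Rightarrow> nat \<Rightarrow> 'a \<Rightarrow> 'a" where
  "root_upto Q 0 v = v"
| "root_upto Q (Suc n) v = (if Q v = {} then v else root_upto Q n (SOME p. p \<in> Q v))"

locale layering =
  fixes k :: nat and V :: "'a set" and P :: "'a \<Rightarrow> 'a set" and rk :: "'a \<Rightarrow> nat"
  assumes width: "parent_structure (Suc k) V P rk"
begin

lemma finite_V: "finite V"
  using width by (simp add: parent_structure_def)

lemma parents_subset: "v \<in> V \<Longrightarrow> P v \<subseteq> V"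
  using width by (simp add: parent_structure_def)

lemma parent_in_V: "v \<in> V \<Longrightarrow> p \<in> P v \<Longrightarrow> p \<in> V"
  using parents_subset by blast

lemma rk_parent_less: "v \<in> V \<Longrightarrow> p \<in> P v \<Longrightarrow> rk p < rk v"
  using width by (simp add: parent_structure_def)

lemma finite_parents: "v \<in> V \<Longrightarrow> finite (P v)"
  using parents_subset finite_V finite_subset by blast

lemma rk_eq_imp_eq: "p \<in> V \<Longrightarrow> q \<in> V \<Longrightarrow> rk p = rk q \<Longrightarrow> p = q"
  using width unfolding parent_structure_def inj_on_def by blast

lemma parents_comparable: "v \<in> V \<Longrightarrow> p \<in> P v \<Longrightarrow> q \<in> P v \<Longrightarrow> p \<noteq> q \<Longrightarrow> p \<in> P q \<or> q \<in> P p"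
  using parent_structure_parents_comparable[OF width] .

lemma depth_upto_stable: "v \<in> V \<Longrightarrow> rk v < n \<Longrightarrow> rk v < m \<Longrightarrow> depth_upto P n v = depth_upto P m v"
proof (induction "rk v" arbitrary: v n m rule: less_induct)
  case less
  obtain n' where n: "n = Suc n'" using less.prems by (cases n) auto
  obtain m' where m: "m = Suc m'" using less.prems by (cases m) auto
  have "depth_upto P n' ` P v = depth_upto P m' ` P v"
  proof (rule image_cong[OF refl])
    fix p assume p: "p \<in> P v"
    have "rk p < rk v" using rk_parent_less less.prems p by auto
    then show "depth_upto P n' p = depth_upto P m' p"
      using less.hyps[of p n' m'] less.prems p parent_in_V n m by auto
  qed
  then show ?case by (simp add: n m)
qed

text \<open>Rank drops along parent links, so fuel rk v + 1 suffices.\<close>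

definition depth :: "'a \<Rightarrow> nat" where
  "depth v = depth_upto P (Suc (rk v)) v"

lemma depth_eq: "v \<in> V \<Longrightarrow> depth v = (if P v = {} then 0 else Suc (Min (depth ` P v)))"
proof -
  assume v: "v \<in> V"
  have "depth_upto P (rk v) ` P v = depth ` P v"
  proof (rule image_cong[OF refl])
    fix p assume p: "p \<in> P v"
    show "depth_upto P (rk v) p = depth p" unfolding depth_def
      using depth_upto_stable[of p "rk v" "Suc (rk p)"] rk_parent_less[OF v p] parent_in_V[OF v p] by auto
  qed
  then show ?thesis unfolding depth_def by simp
qed

lemma depth_no_parents: "v \<in> V \<Longrightarrow> P v = {} \<Longrightarrow> depth v = 0"
  using depth_eq by simp

lemma depth_le_Suc_parent: "v \<in> V \<Longrightarrow> p \<in> P v \<Longrightarrow> depth v \<le> Suc (depth p)"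
  using depth_eq[of v] finite_parents[of v] by (auto intro: Min_le)

lemma depth_parent_witness: "v \<in> V \<Longrightarrow> P v \<noteq> {} \<Longrightarrow> \<exists>m\<in>P v. depth v = Suc (depth m)"
proof -
  assume v: "v \<in> V" and ne: "P v \<noteq> {}"
  have "Min (depth ` P v) \<in> depth ` P v" using finite_parents[OF v] ne by (intro Min_in) auto
  then show ?thesis using depth_eq[OF v] ne by auto
qed

lemma depth_parent_le: "v \<in> V \<Longrightarrow> p \<in> P v \<Longrightarrow> depth p \<le> depth v"
proof (induction "rk v" arbitrary: v p rule: less_induct)
  case less
  then obtain m where m: "m \<in> P v" "depth v = Suc (depth m)"
    using depth_parent_witness by blast
  have "p = m \<or> p \<in> P m \<or> m \<in> P p"
    using parents_comparable less.prems m(1) by blast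
  moreover have "p \<in> P m \<Longrightarrow> depth p \<le> depth m"
    using less rk_parent_less parent_in_V m(1) by blast
  moreover have "m \<in> P p \<Longrightarrow> depth p \<le> Suc (depth m)"
    using depth_le_Suc_parent parent_in_V less.prems by blast
  ultimately show ?case
    using m by auto
qed

lemma depth_parent_cases: "v \<in> V \<Longrightarrow> p \<in> P v \<Longrightarrow> depth p = depth v \<or> Suc (depth p) = depth v"
  using depth_le_Suc_parent[of v p] depth_parent_le[of v p] by auto

lemma depth_adj_cases:
  "u \<in> V \<Longrightarrow> v \<in> V \<Longrightarrow> parent_adj P u v \<Longrightarrow>
    depth u = depth v \<or> Suc (depth u) = depth v \<or> depth u = Suc (depth v)"
  using depth_parent_cases[of v u] depth_parent_cases[of u v] unfolding parent_adj_def by auto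

lemma adj_depth_Suc_parent:
  "u \<in> V \<Longrightarrow> v \<in> V \<Longrightarrow> parent_adj P u v \<Longrightarrow> Suc (depth u) = depth v \<Longrightarrow> u \<in> P v"
  using depth_parent_le[of u v] unfolding parent_adj_def by auto

definition layer_parents :: "'a \<Rightarrow> 'a set" where
  "layer_parents v = {p \<in> P v. depth p = depth v}"

lemma layer_parents_subset: "layer_parents v \<subseteq> P v"
  unfolding layer_parents_def by auto

lemma parent_structure_layer_parents: "parent_structure k V layer_parents rk"
  unfolding parent_structure_def
proof (intro conjI ballI[of V])
  show "finite V" by (rule finite_V)
  show "inj_on rk V" using width by (simp add: parent_structure_def)
  fix v assume v: "v \<in> V"
  show "layer_parents v \<subseteq> V" using parents_subset[OF v] layer_parents_subset by blast
  show "card (layer_parents v) \<le> k"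
  proof (cases "P v = {}")
    case True then show ?thesis unfolding layer_parents_def by simp
  next
    case False
    obtain m where m: "m \<in> P v" "depth v = Suc (depth m)"
      using depth_parent_witness[OF v False] by blast
    then have "layer_parents v \<subset> P v"
      using layer_parents_subset unfolding layer_parents_def by fastforce
    then have "card (layer_parents v) < card (P v)"
      using finite_parents[OF v] psubset_card_mono by blast
    moreover have "card (P v) \<le> Suc k"
      using width v by (simp add: parent_structure_def)
    ultimately show ?thesis by simp
  qed
  show "\<forall>p\<in>layer_parents v. rk p < rk v"
    using rk_parent_less[OF v] layer_parents_subset by blast
  show "\<forall>p\<in>layer_parents v. \<forall>q\<in>layer_parents v. rk p < rk q \<longrightarrow> p \<in> layer_parents q"
    using width v unfolding parent_structure_def layer_parents_def by auto
qed

lemma adj_same_depth_layer_adj: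
  "parent_adj P u v \<Longrightarrow> depth u = depth v \<Longrightarrow> parent_adj layer_parents u v"
  unfolding parent_adj_def layer_parents_def by auto

lemma parents_same_depth_layer_adj:
  "v \<in> V \<Longrightarrow> p \<in> P v \<Longrightarrow> q \<in> P v \<Longrightarrow> p \<noteq> q \<Longrightarrow> depth p = depth q \<Longrightarrow>
    parent_adj layer_parents p q"
  using parents_comparable[of v p q] unfolding parent_adj_def layer_parents_def by auto

lemma root_upto_stable:
  "v \<in> V \<Longrightarrow> rk v < n \<Longrightarrow> rk v < m \<Longrightarrow> root_upto layer_parents n v = root_upto layer_parents m v"
proof (induction "rk v" arbitrary: v n m rule: less_induct)
  case less
  obtain n' where n: "n = Suc n'" using less.prems by (cases n) auto
  obtain m' where m: "m = Suc m'" using less.prems by (cases m) auto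
  show ?case
  proof (cases "layer_parents v = {}")
    case True then show ?thesis by (simp add: n m)
  next
    case False
    define q where "q = (SOME p. p \<in> layer_parents v)"
    have "q \<in> layer_parents v" unfolding q_def using False some_in_eq by blast
    then have "q \<in> V" "rk q < rk v"
      using parent_in_V rk_parent_less layer_parents_subset less.prems by blast+
    then have "root_upto layer_parents n' q = root_upto layer_parents m' q"
      using less.hyps[of q n' m'] less.prems n m by auto
    then show ?thesis using False by (simp add: n m q_def)
  qed
qed

text \<open>Follow arbitrarily chosen parents inside the layer until there are none; by
  layer_root_layer_parent the result does not depend on the choices.\<close>

definition layer_root :: "'a \<Rightarrow> 'a" where
  "layer_root v = root_upto layer_parents (Suc (rk v)) v"

lemma layer_root_self: "layer_parents v = {} \<Longrightarrow> layer_root v = v"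
  unfolding layer_root_def by simp

lemma layer_root_step:
  assumes v: "v \<in> V" and ne: "layer_parents v \<noteq> {}"
  shows "\<exists>q\<in>layer_parents v. layer_root v = layer_root q"
proof
  define q where "q = (SOME p. p \<in> layer_parents v)"
  show q: "q \<in> layer_parents v" unfolding q_def using ne some_in_eq by blast
  then have "q \<in> V" "rk q < rk v"
    using parent_in_V rk_parent_less layer_parents_subset v by blast+
  then have "root_upto layer_parents (rk v) q = layer_root q"
    unfolding layer_root_def using root_upto_stable[of q "rk v" "Suc (rk q)"] by auto
  then show "layer_root v = layer_root q"
    using ne unfolding layer_root_def by (simp add: q_def)
qed

lemma layer_root_is_root:
  "v \<in> V \<Longrightarrow> layer_root v \<in> V \<and> layer_parents (layer_root v) = {} \<and> depth (layer_root v) = depth v"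
proof (induction "rk v" arbitrary: v rule: less_induct)
  case less
  show ?case
  proof (cases "layer_parents v = {}")
    case True then show ?thesis using layer_root_self less.prems by simp
  next
    case False
    then obtain q where q: "q \<in> layer_parents v" "layer_root v = layer_root q"
      using layer_root_step less.prems by blast
    then have "q \<in> V" "rk q < rk v" "depth q = depth v"
      using parent_in_V rk_parent_less less.prems unfolding layer_parents_def by auto
    then show ?thesis using less.hyps[of q] q by auto
  qed
qed

lemma layer_root_layer_parent: "v \<in> V \<Longrightarrow> p \<in> layer_parents v \<Longrightarrow> layer_root p = layer_root v"
proof (induction "rk v" arbitrary: v p rule: less_induct)
  case less
  then obtain q where q: "q \<in> layer_parents v" "layer_root v = layer_root q"
    using layer_root_step by blast
  have "q \<in> V" "p \<in> V" "rk q < rk v" "rk p < rk v"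
    using q less.prems parent_in_V rk_parent_less layer_parents_subset by blast+
  moreover have "p = q \<or> p \<in> layer_parents q \<or> q \<in> layer_parents p"
    using parent_structure_parents_comparable[OF parent_structure_layer_parents] less.prems q(1)
    by blast
  ultimately show ?case
    using less.hyps q(2) by metis
qed

lemma layer_root_layer_adj:
  "u \<in> V \<Longrightarrow> v \<in> V \<Longrightarrow> parent_adj layer_parents u v \<Longrightarrow> layer_root u = layer_root v"
  using layer_root_layer_parent[of v u] layer_root_layer_parent[of u v]
  unfolding parent_adj_def by auto

lemma parent_of_layer_root:
  "v \<in> V \<Longrightarrow> p \<in> P v \<Longrightarrow> Suc (depth p) = depth v \<Longrightarrow> p \<in> P (layer_root v)"
proof (induction "rk v" arbitrary: v p rule: less_induct)
  case less
  show ?case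
  proof (cases "layer_parents v = {}")
    case True then show ?thesis using layer_root_self less.prems by simp
  next
    case False
    then obtain q where q: "q \<in> layer_parents v" "layer_root v = layer_root q"
      using layer_root_step less.prems by blast
    have qP: "q \<in> P v" and dq: "depth q = depth v"
      using q unfolding layer_parents_def by auto
    have "p \<noteq> q" using dq less.prems by auto
    then have "p \<in> P q \<or> q \<in> P p"
      using parents_comparable less.prems qP by blast
    moreover have "q \<notin> P p"
      using depth_parent_le[of p q] parent_in_V less.prems dq by fastforce
    moreover have "rk q < rk v" "q \<in> V"
      using qP less.prems rk_parent_less parent_in_V by blast+
    ultimately show ?thesis
      using less.hyps less.prems dq q(2) by simp
  qed
qed

lemma depth_parent_of_root:
  "r \<in> V \<Longrightarrow> layer_parents r = {} \<Longrightarrow> p \<in> P r \<Longrightarrow> Suc (depth p) = depth r"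
  using depth_parent_cases[of r p] unfolding layer_parents_def by auto

definition top_parent :: "'a \<Rightarrow> 'a" where
  "top_parent r = (SOME p. p \<in> P r \<and> (\<forall>q\<in>P r. rk q \<le> rk p))"

lemma top_parent:
  assumes r: "r \<in> V" "P r \<noteq> {}"
  shows "top_parent r \<in> P r \<and> (\<forall>q\<in>P r. rk q \<le> rk (top_parent r))"
proof -
  obtain m where m: "m \<in> P r" "rk m = Max (rk ` P r)"
    using Max_in[of "rk ` P r"] finite_parents[OF r(1)] r(2) by fastforce
  then have "\<forall>q\<in>P r. rk q \<le> rk m" using finite_parents[OF r(1)] by auto
  then have "\<exists>p. p \<in> P r \<and> (\<forall>q\<in>P r. rk q \<le> rk p)" using m(1) by blast
  then show ?thesis
    unfolding top_parent_def by (rule someI_ex)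
qed

lemma parent_of_top_parent: "r \<in> V \<Longrightarrow> q \<in> P r \<Longrightarrow> q \<noteq> top_parent r \<Longrightarrow> q \<in> P (top_parent r)"
  using top_parent[of r] parents_comparable[of r q "top_parent r"] rk_parent_less parent_in_V
  by (metis empty_iff leD)

lemma top_parent_of_layer_root:
  assumes v: "v \<in> V" "depth v \<noteq> 0"
  shows "top_parent (layer_root v) \<in> P (layer_root v) \<and> top_parent (layer_root v) \<in> V \<and>
    Suc (depth (top_parent (layer_root v))) = depth v"
proof -
  have r: "layer_root v \<in> V" "layer_parents (layer_root v) = {}" "depth (layer_root v) = depth v"
    using layer_root_is_root[OF v(1)] by auto
  then have "P (layer_root v) \<noteq> {}" using depth_no_parents v(2) by auto
  then have "top_parent (layer_root v) \<in> P (layer_root v)" using top_parent r by blast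
  then show ?thesis using depth_parent_of_root[OF r(1) r(2)] parent_in_V[OF r(1)] r by auto
qed

end

lemma lex_less_iff:
  fixes a b c e N :: nat
  assumes "b < N" "e < N"
  shows "a * N + b < c * N + e \<longleftrightarrow> a < c \<or> (a = c \<and> b < e)"
proof (cases "a = c")
  case False
  then consider "Suc a \<le> c" | "Suc c \<le> a" by linarith
  then show ?thesis
  proof cases
    case 1
    then have "Suc a * N \<le> c * N" by (rule mult_le_mono1)
    then show ?thesis using 1 assms by simp
  next
    case 2
    then have "Suc c * N \<le> a * N" by (rule mult_le_mono1)
    then show ?thesis using 2 assms by simp
  qed
qed simp

lemma mixed_radix_eq:
  fixes b b' c c' M :: nat
  assumes "b < M" "b' < M" "b + M * c = b' + M * c'"
  shows "b = b' \<and> c = c'"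
proof -
  have "b = b'"
    using assms mod_mult_self2[of b M c] mod_mult_self2[of b' M c'] by simp
  then show ?thesis using assms by simp
qed

lemma mod_3_eq_imp_eq: "(x::nat) \<le> y \<Longrightarrow> y \<le> x + 2 \<Longrightarrow> x mod 3 = y mod 3 \<Longrightarrow> x = y"
  by presburger

lemma crossing_depths:
  fixes a b c e :: nat
  assumes "a mod 3 = c mod 3" "b mod 3 = e mod 3" "a \<le> c" "e \<le> b"
    "a = b \<or> Suc a = b \<or> a = Suc b" "c = e \<or> Suc c = e \<or> c = Suc e"
  shows "c = a \<and> e = b"
proof -
  have "c = a"
    using mod_3_eq_imp_eq[of a c] assms(1,3-6) by linarith
  moreover have "e = b"
    using mod_3_eq_imp_eq[of e b] assms(2,4-6) calculation by linarith
  ultimately show ?thesis ..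
qed

locale layered_layout = layering +
  fixes lcol :: "'a \<Rightarrow> nat" and lord :: "'a \<Rightarrow> 'a \<Rightarrow> bool"
  assumes layer_layout: "ordered_track_layout V (parent_adj layer_parents) (track_bound k) lcol lord"
begin

lemma lcol_less: "v \<in> V \<Longrightarrow> lcol v < track_bound k"
  using layer_layout unfolding ordered_track_layout_def by blast

lemma lcol_proper: "u \<in> V \<Longrightarrow> v \<in> V \<Longrightarrow> parent_adj layer_parents u v \<Longrightarrow> lcol u \<noteq> lcol v"
  using layer_layout unfolding ordered_track_layout_def by blast

lemma lord_irrefl: "\<not> lord x x"
  using layer_layout unfolding ordered_track_layout_def by blast

lemma lord_trans: "lord x y \<Longrightarrow> lord y z \<Longrightarrow> lord x z"
  using layer_layout unfolding ordered_track_layout_def by blast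

lemma lord_total: "x \<in> V \<Longrightarrow> y \<in> V \<Longrightarrow> x \<noteq> y \<Longrightarrow> lord x y \<or> lord y x"
  using layer_layout unfolding ordered_track_layout_def by blast

lemma lord_no_crossing:
  "u \<in> V \<Longrightarrow> v \<in> V \<Longrightarrow> x \<in> V \<Longrightarrow> y \<in> V \<Longrightarrow>
    parent_adj layer_parents u v \<Longrightarrow> parent_adj layer_parents x y \<Longrightarrow>
    lcol u = lcol x \<Longrightarrow> lcol v = lcol y \<Longrightarrow> lord u x \<Longrightarrow> lord y v \<Longrightarrow> False"
  using layer_layout unfolding ordered_track_layout_def by blast

definition lpos :: "'a \<Rightarrow> nat" where
  "lpos v = card {w \<in> V. lord w v}"

lemma lpos_less: "v \<in> V \<Longrightarrow> w \<in> V \<Longrightarrow> lord v w \<Longrightarrow> lpos v < lpos w"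
proof -
  assume a: "v \<in> V" "w \<in> V" "lord v w"
  have "{z \<in> V. lord z v} \<subset> {z \<in> V. lord z w}"
    using a lord_trans lord_irrefl by blast
  then show ?thesis
    unfolding lpos_def using finite_V psubset_card_mono[of "{z \<in> V. lord z w}"] by auto
qed

lemma lpos_less_iff: "v \<in> V \<Longrightarrow> w \<in> V \<Longrightarrow> lpos v < lpos w \<longleftrightarrow> lord v w"
  using lpos_less[of v w] lpos_less[of w v] lord_total[of v w] by fastforce

definition base :: nat where
  "base = Suc (card V + Max (rk ` V))"

lemma lpos_less_base: "lpos v < base"
proof -
  have "lpos v \<le> card V" unfolding lpos_def using finite_V by (intro card_mono) auto
  then show ?thesis unfolding base_def by linarith
qed

lemma rk_less_base: "v \<in> V \<Longrightarrow> rk v < base"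
  using finite_V unfolding base_def by (simp add: le_imp_less_Suc trans_le_add2)

text \<open>Within a layer, vertices are ordered lexicographically by the key of the top parent of
  their layer root (a vertex of the previous layer), the rank of their layer root, and their
  position in lord; key_upto writes this triple in base base, with the depth as fuel.\<close>

primrec key_upto :: "nat \<Rightarrow> 'a \<Rightarrow> nat" where
  "key_upto 0 v = rk (layer_root v) * base + lpos v"
| "key_upto (Suc n) v = (key_upto n (top_parent (layer_root v)) * base + rk (layer_root v)) * base + lpos v"

definition key :: "'a \<Rightarrow> nat" where
  "key v = key_upto (depth v) v"

definition block_key :: "'a \<Rightarrow> nat" where
  "block_key v = (if depth v = 0 then 0 else key (top_parent (layer_root v))) * base + rk (layer_root v)"

lemma key_eq: "v \<in> V \<Longrightarrow> key v = block_key v * base + lpos v"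
proof (cases "depth v")
  case 0 then show ?thesis unfolding key_def block_key_def by simp
next
  case (Suc n)
  assume v: "v \<in> V"
  then have "depth (top_parent (layer_root v)) = n"
    using top_parent_of_layer_root[OF v] Suc by simp
  then show ?thesis unfolding key_def block_key_def using Suc by simp
qed

lemma block_key_eq_iff:
  assumes "v \<in> V" "w \<in> V" "depth v = depth w"
  shows "block_key v = block_key w \<longleftrightarrow> layer_root v = layer_root w"
proof
  have roots: "layer_root v \<in> V" "layer_root w \<in> V"
    using layer_root_is_root assms by auto
  define a where "a = (if depth v = 0 then 0 else key (top_parent (layer_root v)))"
  define b where "b = (if depth w = 0 then 0 else key (top_parent (layer_root w)))"
  assume "block_key v = block_key w"
  then have "rk (layer_root v) + base * a = rk (layer_root w) + base * b"
    unfolding block_key_def a_def b_def by (simp only: mult.commute add.commute)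
  then have "rk (layer_root v) = rk (layer_root w)"
    using mixed_radix_eq rk_less_base[OF roots(1)] rk_less_base[OF roots(2)] by blast
  then show "layer_root v = layer_root w" using rk_eq_imp_eq roots by blast
next
  assume "layer_root v = layer_root w"
  then show "block_key v = block_key w" using assms(3) by (simp add: block_key_def)
qed

lemma key_less_iff:
  assumes "v \<in> V" "w \<in> V" "depth v = depth w"
  shows "key v < key w \<longleftrightarrow> block_key v < block_key w \<or> (layer_root v = layer_root w \<and> lord v w)"
proof -
  have "key v < key w \<longleftrightarrow> block_key v < block_key w \<or> (block_key v = block_key w \<and> lpos v < lpos w)"
    unfolding key_eq[OF assms(1)] key_eq[OF assms(2)] by (rule lex_less_iff[OF lpos_less_base lpos_less_base])
  then show ?thesis
    unfolding block_key_eq_iff[OF assms] lpos_less_iff[OF assms(1,2)] .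
qed

lemma key_inj:
  assumes "v \<in> V" "w \<in> V" "depth v = depth w" "key v = key w"
  shows "v = w"
proof (rule ccontr)
  assume "v \<noteq> w"
  then have "lord v w \<or> lord w v" using lord_total assms by blast
  moreover have "block_key v = block_key w"
    using key_less_iff[OF assms(1-3)] key_less_iff[OF assms(2,1) assms(3)[symmetric]] assms(4)
    by (metis less_irrefl linorder_neqE_nat)
  ultimately show False
    using key_less_iff[OF assms(1-3)] key_less_iff[OF assms(2,1) assms(3)[symmetric]] assms(4)
      block_key_eq_iff[OF assms(1-3)] by auto
qed

lemma lcol_inj_on_parents_same_depth: "a \<in> V \<Longrightarrow> inj_on lcol {w \<in> insert a (P a). depth w = depth a}"
proof (rule inj_onI, rule ccontr)
  fix u x
  assume a: "a \<in> V" and u: "u \<in> {w \<in> insert a (P a). depth w = depth a}"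
    and x: "x \<in> {w \<in> insert a (P a). depth w = depth a}" and "lcol u = lcol x" "u \<noteq> x"
  moreover have "parent_adj layer_parents u x"
  proof (cases "u = a \<or> x = a")
    case True
    then show ?thesis using u x \<open>u \<noteq> x\<close> unfolding parent_adj_def layer_parents_def by auto
  next
    case False
    then show ?thesis using parents_same_depth_layer_adj[OF a, of u x] u x \<open>u \<noteq> x\<close> by auto
  qed
  ultimately show False
    using lcol_proper parent_in_V by blast
qed

lemma layer_no_crossing:
  assumes V: "u \<in> V" "v \<in> V" "x \<in> V" "y \<in> V"
    and depths: "depth u = depth v" "depth x = depth y" "depth u = depth x"
    and adj: "parent_adj layer_parents u v" "parent_adj layer_parents x y"
    and lcols: "lcol u = lcol x" "lcol v = lcol y"
    and keys: "key u < key x" "key y < key v"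
  shows False
proof -
  have roots: "layer_root u = layer_root v" "layer_root x = layer_root y"
    using layer_root_layer_adj V adj by blast+
  have blocks: "block_key u = block_key v" "block_key x = block_key y"
    using block_key_eq_iff V depths roots by blast+
  show False
  proof (cases "layer_root u = layer_root x")
    case True
    then have "block_key u = block_key x" using block_key_eq_iff V depths by blast
    then have "lord u x" "lord y v"
      using keys key_less_iff[of u x] key_less_iff[of y v] V depths True roots blocks by auto
    then show False using lord_no_crossing V adj lcols by blast
  next
    case False
    then have "block_key u < block_key x" "block_key y < block_key v"
      using keys key_less_iff[of u x] key_less_iff[of y v] V depths roots by auto
    then show False using blocks by simp
  qed
qed

definition parent_col :: "'a \<Rightarrow> nat" where
  "parent_col v = (if depth v = 0 then 0 else lcol (top_parent (layer_root v)))"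

lemma key_top_parent_le:
  assumes V: "v \<in> V" "y \<in> V" and depths: "depth y = depth v" "depth v \<noteq> 0"
    and roots: "layer_root y \<noteq> layer_root v" and keys: "key y < key v"
  shows "key (top_parent (layer_root y)) \<le> key (top_parent (layer_root v))"
proof -
  have "block_key y < block_key v"
    using key_less_iff[OF V(2,1) depths(1)] roots keys by auto
  then have "key (top_parent (layer_root y)) * base + rk (layer_root y) <
      key (top_parent (layer_root v)) * base + rk (layer_root v)"
    using depths unfolding block_key_def by simp
  moreover have "rk (layer_root y) < base" "rk (layer_root v) < base"
    using rk_less_base layer_root_is_root V by blast+
  ultimately show ?thesis
    using lex_less_iff by fastforce
qed

lemma parent_near_top_parent:
  assumes v: "v \<in> V" and u: "u \<in> P v" "Suc (depth u) = depth v"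
  shows "u \<in> {w \<in> insert (top_parent (layer_root v)) (P (top_parent (layer_root v))).
    depth w = depth (top_parent (layer_root v))}"
proof -
  have "layer_root v \<in> V" "u \<in> P (layer_root v)"
    using layer_root_is_root parent_of_layer_root v u by blast+
  moreover have "Suc (depth (top_parent (layer_root v))) = depth v"
    using top_parent_of_layer_root[OF v] u(2) by simp
  ultimately show ?thesis
    using parent_of_top_parent u(2) by auto
qed

lemma consecutive_layers_no_crossing:
  assumes V: "u \<in> V" "v \<in> V" "x \<in> V" "y \<in> V"
    and depths: "depth x = depth u" "depth v = Suc (depth u)" "depth y = depth v"
    and parents: "u \<in> P v" "x \<in> P y"
    and cols: "lcol u = lcol x" "parent_col v = parent_col y"
    and keys: "key u < key x" "key y < key v"
  shows False
proof -
  define a b where "a = top_parent (layer_root v)" and "b = top_parent (layer_root y)"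
  have a: "a \<in> V" "depth a = depth u" and b: "b \<in> V" "depth b = depth u"
    using top_parent_of_layer_root[OF V(2)] top_parent_of_layer_root[OF V(4)] depths
    unfolding a_def b_def by auto
  have ua: "u \<in> {w \<in> insert a (P a). depth w = depth a}"
    and xb: "x \<in> {w \<in> insert b (P b). depth w = depth b}"
    using parent_near_top_parent V parents depths unfolding a_def b_def by auto
  have "lcol a = lcol b"
    using cols(2) depths unfolding parent_col_def a_def b_def by simp
  have "u \<noteq> x" using keys by auto
  then have "a \<noteq> b"
    using lcol_inj_on_parents_same_depth[OF a(1)] ua xb cols(1) a(2) b(2) by (auto dest: inj_onD)
  then have "key a \<noteq> key b" and "layer_root y \<noteq> layer_root v"
    using key_inj[OF a(1) b(1)] a(2) b(2) unfolding a_def b_def by auto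
  then have ba: "key b < key a"
    using key_top_parent_le[OF V(2,4)] depths keys(2) unfolding a_def b_def by fastforce
  have "u \<noteq> a"
  proof
    assume "u = a"
    then have "x = b"
      using lcol_inj_on_parents_same_depth[OF b(1)] xb cols(1) \<open>lcol a = lcol b\<close> b(2)
      by (auto dest: inj_onD)
    then show False using keys(1) ba \<open>u = a\<close> by simp
  qed
  moreover have "x \<noteq> b"
  proof
    assume "x = b"
    then have "lcol u = lcol a" using cols(1) \<open>lcol a = lcol b\<close> by simp
    then show False
      using inj_onD[OF lcol_inj_on_parents_same_depth[OF a(1)]] ua \<open>u \<noteq> a\<close> by blast
  qed
  ultimately have "parent_adj layer_parents u a" "parent_adj layer_parents x b"
    using ua xb unfolding parent_adj_def layer_parents_def by auto
  moreover have "depth u = depth a" "depth x = depth b" "depth u = depth x"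
    using a(2) b(2) depths(1) by simp_all
  ultimately show False
    using layer_no_crossing[OF V(1) a(1) V(3) b(1)] cols(1) \<open>lcol a = lcol b\<close> keys(1) ba by blast
qed

definition col :: "'a \<Rightarrow> nat" where
  "col v = depth v mod 3 + 3 * (lcol v + track_bound k * parent_col v)"

definition ord :: "'a \<Rightarrow> 'a \<Rightarrow> bool" where
  "ord v w \<longleftrightarrow> depth v < depth w \<or> (depth v = depth w \<and> key v < key w)"

lemma parent_col_less: "v \<in> V \<Longrightarrow> parent_col v < track_bound k"
  using top_parent_of_layer_root lcol_less track_bound_pos unfolding parent_col_def by auto

lemma col_less: "v \<in> V \<Longrightarrow> col v < track_bound (Suc k)"
proof -
  assume v: "v \<in> V"
  define T where "T = track_bound k"
  have a: "lcol v < T" "parent_col v < T" using lcol_less parent_col_less v T_def by auto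
  have "lcol v + T * parent_col v < T + T * parent_col v" using a by simp
  also have "\<dots> = T * Suc (parent_col v)" by simp
  also have "\<dots> \<le> T * T" using a by (intro mult_le_mono2) simp
  finally have "lcol v + T * parent_col v < T * T" .
  then show ?thesis unfolding col_def T_def by simp
qed

lemma col_eqD:
  assumes "u \<in> V" "v \<in> V" "col u = col v"
  shows "depth u mod 3 = depth v mod 3 \<and> lcol u = lcol v \<and> parent_col u = parent_col v"
proof -
  have "depth u mod 3 + 3 * (lcol u + track_bound k * parent_col u) =
      depth v mod 3 + 3 * (lcol v + track_bound k * parent_col v)"
    using assms(3) unfolding col_def .
  then have "depth u mod 3 = depth v mod 3 \<and>
      lcol u + track_bound k * parent_col u = lcol v + track_bound k * parent_col v"
    by (rule mixed_radix_eq[rotated 2]) simp_all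
  then show ?thesis
    using mixed_radix_eq[of "lcol u" "track_bound k" "lcol v"] lcol_less assms by blast
qed

lemma col_proper:
  assumes "u \<in> V" "v \<in> V" "parent_adj P u v"
  shows "col u \<noteq> col v"
proof
  assume "col u = col v"
  then have "depth u mod 3 = depth v mod 3" "lcol u = lcol v"
    using col_eqD assms by blast+
  moreover have "Suc n mod 3 \<noteq> n mod 3" for n :: nat
    by presburger
  ultimately have "depth u = depth v"
    using depth_adj_cases[OF assms] by metis
  then show False
    using adj_same_depth_layer_adj lcol_proper assms \<open>lcol u = lcol v\<close> by blast
qed

lemma ord_total: "x \<in> V \<Longrightarrow> y \<in> V \<Longrightarrow> x \<noteq> y \<Longrightarrow> ord x y \<or> ord y x"
  using key_inj[of x y] unfolding ord_def by fastforce

lemma ord_no_crossing: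
  assumes V: "u \<in> V" "v \<in> V" "x \<in> V" "y \<in> V"
    and adj: "parent_adj P u v" "parent_adj P x y"
    and cols: "col u = col x" "col v = col y"
    and ord: "ord u x" "ord y v"
  shows False
proof -
  have lcols: "lcol u = lcol x" "lcol v = lcol y"
    and parent_cols: "parent_col u = parent_col x" "parent_col v = parent_col y"
    using col_eqD V cols by blast+
  have "depth x = depth u \<and> depth y = depth v"
  proof (rule crossing_depths)
    show "depth u mod 3 = depth x mod 3" "depth v mod 3 = depth y mod 3"
      using col_eqD V cols by blast+
    show "depth u \<le> depth x" "depth y \<le> depth v"
      using ord unfolding ord_def by auto
  qed (use depth_adj_cases V adj in blast)+
  then have depths: "depth x = depth u" "depth y = depth v" by simp_all
  then have keys: "key u < key x" "key y < key v"
    using ord unfolding ord_def by auto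
  consider "depth u = depth v" | "Suc (depth u) = depth v" | "depth u = Suc (depth v)"
    using depth_adj_cases V adj by blast
  then show False
  proof cases
    case 1
    then show False
      using layer_no_crossing[OF V] adj_same_depth_layer_adj adj depths lcols keys by simp
  next
    case 2
    then have "u \<in> P v" "x \<in> P y"
      using adj_depth_Suc_parent V adj depths by auto
    then show False
      using consecutive_layers_no_crossing[OF V] depths 2 lcols parent_cols keys by simp
  next
    case 3
    moreover have "parent_adj P v u" "parent_adj P y x"
      using adj unfolding parent_adj_def by auto
    ultimately have "v \<in> P u" "y \<in> P x"
      using adj_depth_Suc_parent V depths by auto
    then show False
      using consecutive_layers_no_crossing[OF V(4,3,2,1)] depths 3 lcols parent_cols keys by simp
  qed
qed

lemma ordered_track_layout_next: "ordered_track_layout V (parent_adj P) (track_bound (Suc k)) col ord"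
proof -
  have "\<forall>x. \<not> ord x x" "\<forall>x y z. ord x y \<longrightarrow> ord y z \<longrightarrow> ord x z"
    unfolding ord_def by auto
  then show ?thesis
    unfolding ordered_track_layout_def using col_less col_proper ord_total ord_no_crossing by blast
qed

end

theorem parent_structure_ordered_track_layout:
  "parent_structure k V P rk \<Longrightarrow> \<exists>col lt. ordered_track_layout V (parent_adj P) (track_bound k) col lt"
proof (induction k arbitrary: P)
  case 0
  then have "P v = {}" if "v \<in> V" for v
    using that card_0_eq[of "P v"] finite_subset[of "P v" V]
    unfolding parent_structure_def by auto
  moreover have "inj_on rk V"
    using 0 unfolding parent_structure_def by blast
  ultimately have "ordered_track_layout V (parent_adj P) (track_bound 0) (\<lambda>_. 0) (\<lambda>v w. rk v < rk w)"
    unfolding ordered_track_layout_def parent_adj_def inj_on_def by (auto, metis nat_neq_iff)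
  then show ?case by blast
next
  case (Suc k)
  interpret layering k V P rk
    using Suc.prems by unfold_locales
  obtain lcol lord where "ordered_track_layout V (parent_adj layer_parents) (track_bound k) lcol lord"
    using Suc.IH[OF parent_structure_layer_parents] by blast
  then interpret layered_layout k V P rk lcol lord
    by unfold_locales
  show ?case
    using ordered_track_layout_next by blast
qed

lemma parent_edge_adj:
  assumes "parent_structure k V P rk" "{u, w} \<in> parent_edges V P"
  shows "u \<in> V \<and> w \<in> V \<and> parent_adj P u w"
proof -
  obtain a p where "{u, w} = {a, p}" "a \<in> V" "p \<in> P a"
    using assms(2) unfolding parent_edges_def by blast
  moreover have "p \<in> V" using assms(1) \<open>a \<in> V\<close> \<open>p \<in> P a\<close> unfolding parent_structure_def by blast
  ultimately show ?thesis unfolding parent_adj_def by (auto simp: doubleton_eq_iff)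
qed

lemma parent_structure_stack:
  assumes ps: "parent_structure k V P rk" and v: "v \<notin> V"
    and C: "C \<subseteq> V" "card C \<le> k"
    and clique: "\<forall>p\<in>C. \<forall>q\<in>C. p \<noteq> q \<longrightarrow> {p, q} \<in> parent_edges V P"
  shows "parent_structure k (insert v V) (P(v := C)) (rk(v := Suc (Max (rk ` V))))"
    (is "parent_structure k _ ?P ?rk")
proof -
  have fin: "finite V" using ps unfolding parent_structure_def by blast
  have rk_less: "rk w < Suc (Max (rk ` V))" if "w \<in> V" for w
    using fin that by (simp add: le_imp_less_Suc)
  have C_ordered: "p \<in> P q" if "p \<in> C" "q \<in> C" "rk p < rk q" for p q
  proof -
    have "{p, q} \<in> parent_edges V P" using clique that by auto
    then obtain a b where ab: "{p, q} = {a, b}" "a \<in> V" "b \<in> P a"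
      unfolding parent_edges_def by blast
    then have "rk b < rk a" using ps unfolding parent_structure_def by blast
    then show ?thesis using ab that(3) by (auto simp: doubleton_eq_iff)
  qed
  have old: "P w \<subseteq> V \<and> card (P w) \<le> k \<and> (\<forall>p\<in>P w. rk p < rk w) \<and>
      (\<forall>p\<in>P w. \<forall>q\<in>P w. rk p < rk q \<longrightarrow> p \<in> P q)" if "w \<in> V" for w
    using ps that unfolding parent_structure_def by blast
  have "inj_on ?rk (insert v V)"
    using ps v rk_less unfolding parent_structure_def inj_on_def
    by (metis fun_upd_apply insert_iff less_irrefl)
  moreover have "?P w \<subseteq> insert v V \<and> card (?P w) \<le> k \<and> (\<forall>p\<in>?P w. ?rk p < ?rk w) \<and>
      (\<forall>p\<in>?P w. \<forall>q\<in>?P w. ?rk p < ?rk q \<longrightarrow> p \<in> ?P q)" if "w \<in> insert v V" for w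
  proof (cases "w = v")
    case True
    have "\<forall>p\<in>C. p \<noteq> v" using C v by blast
    then show ?thesis using True C C_ordered rk_less by auto
  next
    case False
    then have "w \<in> V" using that by blast
    moreover have "\<forall>p\<in>P w. p \<noteq> v" using old[OF \<open>w \<in> V\<close>] v by blast
    ultimately show ?thesis using old[OF \<open>w \<in> V\<close>] False by auto
  qed
  ultimately show ?thesis
    using fin unfolding parent_structure_def by blast
qed

lemma parent_edges_stack:
  assumes "parent_structure k V P rk" "v \<notin> V"
  shows "parent_edges (insert v V) (P(v := C)) = parent_edges V P \<union> (\<lambda>c. {v, c}) ` C"
  using assms unfolding parent_edges_def parent_structure_def by auto

lemma planar3tree_faces_parent_structure:
  "planar3tree_faces V E F \<Longrightarrow> \<exists>P rk. parent_structure 3 V P rk \<and> E = parent_edges V P \<and>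
     (\<forall>f\<in>#F. f \<subseteq> V \<and> (\<forall>p\<in>f. \<forall>q\<in>f. p \<noteq> q \<longrightarrow> {p, q} \<in> E))"
proof (induction rule: planar3tree_faces.induct)
  case (base a b c)
  define P where "P w = (if w = b then {a} else if w = c then {a, b} else {})" for w
  define rk :: "'a \<Rightarrow> nat" where "rk w = (if w = a then 0 else if w = b then 1 else 2)" for w
  have "parent_structure 3 {a, b, c} P rk"
    unfolding parent_structure_def P_def rk_def using base by (auto simp: inj_on_def card_insert_if)
  moreover have "{{a, b}, {b, c}, {a, c}} = parent_edges {a, b, c} P"
    unfolding parent_edges_def P_def using base by (auto simp: insert_commute)
  ultimately show ?case by (auto simp: insert_commute)
next
  case (step V E F x y z v)
  then obtain P rk where ps: "parent_structure 3 V P rk" and E: "E = parent_edges V P"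
    and faces: "\<forall>f\<in>#F. f \<subseteq> V \<and> (\<forall>p\<in>f. \<forall>q\<in>f. p \<noteq> q \<longrightarrow> {p, q} \<in> E)"
    by blast
  have face: "{x, y, z} \<subseteq> V" "\<forall>p\<in>{x, y, z}. \<forall>q\<in>{x, y, z}. p \<noteq> q \<longrightarrow> {p, q} \<in> E"
    using bspec[OF faces step.hyps(2)] by blast+
  have "card {x, y, z} \<le> 3" by (simp add: card_insert_if)
  then have "parent_structure 3 (insert v V) (P(v := {x, y, z})) (rk(v := Suc (Max (rk ` V))))"
    using parent_structure_stack[OF ps step.hyps(3)] face E by blast
  moreover have "E \<union> {{v, x}, {v, y}, {v, z}} = parent_edges (insert v V) (P(v := {x, y, z}))"
    using parent_edges_stack[OF ps step.hyps(3)] E by auto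
  moreover have "f \<subseteq> insert v V \<and> (\<forall>p\<in>f. \<forall>q\<in>f. p \<noteq> q \<longrightarrow> {p, q} \<in> E \<union> {{v, x}, {v, y}, {v, z}})"
    if f: "f \<in># add_mset {v, x, y} (add_mset {v, y, z} (add_mset {v, x, z} (F - {#{x, y, z}#})))" for f
  proof -
    consider "f = {v, x, y}" | "f = {v, y, z}" | "f = {v, x, z}" | "f \<in># F"
      using f by (auto dest: in_diffD)
    then show ?thesis
    proof cases
      case 4
      then show ?thesis using bspec[OF faces] by blast
    qed (use face in \<open>auto simp: insert_commute\<close>)
  qed
  ultimately show ?case by meson
qed

theorem mainTheorem3:
  fixes V :: "'a set" and E :: "'a set set"
  assumes "planar_3_tree V E"
  shows "\<exists>t\<le>4000. has_track_layout V E t"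
proof -
  obtain F where "planar3tree_faces V E F"
    using assms unfolding planar_3_tree_def by blast
  then obtain P rk where ps: "parent_structure 3 V P rk" and E: "E = parent_edges V P"
    using planar3tree_faces_parent_structure by blast
  obtain col lt where "ordered_track_layout V (parent_adj P) (track_bound 3) col lt"
    using parent_structure_ordered_track_layout[OF ps] by blast
  then have "has_track_layout V E (track_bound 3)"
    using ordered_track_layout_has_track_layout parent_edge_adj[OF ps] unfolding E by blast
  moreover have "track_bound 3 = 2187"
    by (simp add: numeral_3_eq_3)
  ultimately show ?thesis
    by (intro exI[of _ "track_bound 3"]) simp
qed

end
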